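(* Let ${\bf F}^*_0(z)=\sum_n {\bf f}^*_0(n)z^n$, where ${\bf f}^*_0(n)$ is the total weight of secondary structures over $[n]$ containing the arc $(1,n)$, and let ${\bf F}_0(z)=\sum_n {\bf f}_0(n)z^n$, where ${\bf f}_0(n)$ is the total weight of all secondary structures over $[n]$ (including the empty structure for $n=0$). Then $$ {\bf F}^*_0(z)=\frac{6}{16}e^{0.5}z^2\frac{z}{1-z}+\frac{6}{16}e^{1}z^2\left(\frac{1}{1-z}\right)^2{\bf F}^*_0(z)+\frac{6}{16}e^{-5}z^2\frac{\left({\bf F}^*_0(z)\frac{1}{1-z}\right)^2}{1-{\bf F}^*_0(z)\frac{1}{1-z}}\frac{1}{1-z}, $$ ${\bf F}^*_0(z)$ is the unique formal power series with zero constant term satisfying this equation, and $$ {\bf F}_0(z)=\frac{1}{1-z}\cdot\frac{1}{1-{\bf F}^*_0(z)\frac{1}{1-z}}. $$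
   Context: A secondary structure over $[n]=\{1,\dots,n\}$ is a set of arcs $(i,j)$, $1\le i<j\le n$, each vertex in at most one arc, with no two arcs crossing (no $i<k<j<l$ with $(i,j),(k,l)$ both arcs) and no arc of the form $(i,i+1)$. For an arc $(i,j)$, the arcs directly nested in it are the arcs $(k,l)$ with $i<k<l<j$ not contained in any other arc $(k',l')$ with $i<k'<k<l<l'<j$. The loop closed by $(i,j)$ is a hairpin loop if $(i,j)$ has no directly nested arc, an interior loop (including stacks and bulges) if it has exactly one directly nested arc, and a multi-loop if it has at least two directly nested arcs. The weight of a secondary structure is $(6/16)^{\#\mathrm{arcs}}\cdot e^{0.5\,h}\cdot e^{1\cdot i}\cdot e^{-5\,m}$, where $h,i,m$ are the numbers of hairpin loops, interior loops and multi-loops, respectively, and $e$ is Euler's number. *)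

theory Defs
  imports "HOL-Computational_Algebra.Formal_Power_Series"
begin

definition sec_struct :: "nat \<Rightarrow> (nat \<times> nat) set \<Rightarrow> bool" where
  "sec_struct n S \<longleftrightarrow>
     S \<subseteq> {(i, j). 1 \<le> i \<and> i < j \<and> j \<le> n} \<and>
     (\<forall>(i, j)\<in>S. \<forall>(k, l)\<in>S. (i, j) \<noteq> (k, l) \<longrightarrow> {i, j} \<inter> {k, l} = {}) \<and>
     (\<forall>(i, j)\<in>S. \<forall>(k, l)\<in>S. \<not> (i < k \<and> k < j \<and> j < l)) \<and>
     (\<forall>(i, j)\<in>S. j \<noteq> i + 1)"

definition directly_nested :: "(nat \<times> nat) set \<Rightarrow> nat \<times> nat \<Rightarrow> (nat \<times> nat) set" where
  "directly_nested S a =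
     {(k, l) \<in> S. fst a < k \<and> k < l \<and> l < snd a \<and>
        \<not> (\<exists>(k', l')\<in>S. fst a < k' \<and> k' < k \<and> l < l' \<and> l' < snd a)}"

definition num_hairpin :: "(nat \<times> nat) set \<Rightarrow> nat" where
  "num_hairpin S = card {a \<in> S. card (directly_nested S a) = 0}"

definition num_interior :: "(nat \<times> nat) set \<Rightarrow> nat" where
  "num_interior S = card {a \<in> S. card (directly_nested S a) = 1}"

definition num_multi :: "(nat \<times> nat) set \<Rightarrow> nat" where
  "num_multi S = card {a \<in> S. card (directly_nested S a) \<ge> 2}"

definition ss_weight :: "(nat \<times> nat) set \<Rightarrow> real" where
  "ss_weight S = (6/16) ^ card S * exp (1/2 * real (num_hairpin S))
       * exp (1 * real (num_interior S)) * exp (-5 * real (num_multi S))"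

definition f0 :: "nat \<Rightarrow> real" where
  "f0 n = (\<Sum>S\<in>{S. sec_struct n S}. ss_weight S)"

definition f0_star :: "nat \<Rightarrow> real" where
  "f0_star n = (\<Sum>S\<in>{S. sec_struct n S \<and> (1, n) \<in> S}. ss_weight S)"

end

theory Submission
  imports Defs
begin

(* A structure on [n + 1] either leaves n + 1 unpaired or pairs it with some a + 1; in the
   latter case it is the juxtaposition of a structure on [a] and a structure on [n + 1 - a]
   closed by the arc joining its ends. The weight is a product over the arcs of factors that
   depend only on the loop an arc closes, so weights multiply under juxtaposition, and
   juxtaposition adds exactly one exterior arc (an arc not nested in any other). Hence, if
   H_P counts the structures whose number of exterior arcs satisfies P, then
   (1 - z) H_P = [P 0] + H_{P (k + 1)} F*_0. A closed structure on [m + 2] is an arc (1, m + 2)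
   around a structure on [m], and the loop closed by this arc has as many branches as the
   inner structure has exterior arcs, which expresses F*_0 through H_{k = 0}, H_{k = 1} and
   H_{k >= 2}. Solving this linear system gives F_0 = 1/(1 - z - F*_0) and the functional
   equation. For uniqueness, the difference of two solutions without constant term, multiplied
   by a power series with constant term 1, vanishes. *)

section \<open>Arc sets and shifts\<close>

(* The conditions of sec_struct except the bounds 1 <= i and j <= n; unlike sec_struct they are
   invariant under shifting all arcs. *)
definition valid_arcs :: "(nat \<times> nat) set \<Rightarrow> bool" where
  "valid_arcs S \<longleftrightarrow> (\<forall>(i, j)\<in>S. i < j \<and> j \<noteq> i + 1) \<and>
     (\<forall>(i, j)\<in>S. \<forall>(k, l)\<in>S. (i, j) \<noteq> (k, l) \<longrightarrow> i \<noteq> k \<and> i \<noteq> l \<and> j \<noteq> k \<and> j \<noteq> l) \<and>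
     (\<forall>(i, j)\<in>S. \<forall>(k, l)\<in>S. \<not> (i < k \<and> k < j \<and> j < l))"

lemma sec_struct_iff: "sec_struct n S \<longleftrightarrow> valid_arcs S \<and> (\<forall>(i, j)\<in>S. 1 \<le> i \<and> j \<le> n)"
proof -
  have disjoint: "{i, j} \<inter> {k, l} = {} \<longleftrightarrow> i \<noteq> k \<and> i \<noteq> l \<and> j \<noteq> k \<and> j \<noteq> l" for i j k l :: nat
    by auto
  show ?thesis
    unfolding sec_struct_def valid_arcs_def disjoint by (simp add: subset_iff) blast
qed

lemma valid_arcsI:
  assumes "\<And>i j. (i, j) \<in> S \<Longrightarrow> i < j \<and> j \<noteq> i + 1"
    and "\<And>i j k l. (i, j) \<in> S \<Longrightarrow> (k, l) \<in> S \<Longrightarrow> (i, j) \<noteq> (k, l) \<Longrightarrow>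
           i \<noteq> k \<and> i \<noteq> l \<and> j \<noteq> k \<and> j \<noteq> l"
    and "\<And>i j k l. (i, j) \<in> S \<Longrightarrow> (k, l) \<in> S \<Longrightarrow> \<not> (i < k \<and> k < j \<and> j < l)"
  shows "valid_arcs S"
  using assms unfolding valid_arcs_def by blast

lemma valid_arcs_arc: "valid_arcs S \<Longrightarrow> (i, j) \<in> S \<Longrightarrow> i < j \<and> j \<noteq> i + 1"
  unfolding valid_arcs_def by blast

lemma valid_arcs_disjoint:
  "valid_arcs S \<Longrightarrow> (i, j) \<in> S \<Longrightarrow> (k, l) \<in> S \<Longrightarrow> (i, j) \<noteq> (k, l) \<Longrightarrow>
     i \<noteq> k \<and> i \<noteq> l \<and> j \<noteq> k \<and> j \<noteq> l"
  unfolding valid_arcs_def by blast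

lemma valid_arcs_noncrossing:
  "valid_arcs S \<Longrightarrow> (i, j) \<in> S \<Longrightarrow> (k, l) \<in> S \<Longrightarrow> \<not> (i < k \<and> k < j \<and> j < l)"
  unfolding valid_arcs_def by blast

lemma valid_arcs_subset: "valid_arcs S \<Longrightarrow> T \<subseteq> S \<Longrightarrow> valid_arcs T"
  unfolding valid_arcs_def by blast

lemma valid_arcs_Un:
  assumes A: "valid_arcs A" and B: "valid_arcs B" and sep: "\<forall>x\<in>A. \<forall>y\<in>B. snd x < fst y"
  shows "valid_arcs (A \<union> B)"
proof (rule valid_arcsI)
  have sep: "j < k" if "(i, j) \<in> A" "(k, l) \<in> B" for i j k l using sep that by fastforce
  note arc = valid_arcs_arc[OF A] valid_arcs_arc[OF B]
  fix i j k l
  show "(i, j) \<in> A \<union> B \<Longrightarrow> i < j \<and> j \<noteq> i + 1" using arc by blast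
  show "(i, j) \<in> A \<union> B \<Longrightarrow> (k, l) \<in> A \<union> B \<Longrightarrow> (i, j) \<noteq> (k, l) \<Longrightarrow>
      i \<noteq> k \<and> i \<noteq> l \<and> j \<noteq> k \<and> j \<noteq> l"
    using valid_arcs_disjoint[OF A, of i j k l] valid_arcs_disjoint[OF B, of i j k l]
      arc[of i j] arc[of k l] sep[of i j k l] sep[of k l i j] by auto
  show "(i, j) \<in> A \<union> B \<Longrightarrow> (k, l) \<in> A \<union> B \<Longrightarrow> \<not> (i < k \<and> k < j \<and> j < l)"
    using valid_arcs_noncrossing[OF A, of i j k l] valid_arcs_noncrossing[OF B, of i j k l]
      arc[of i j] arc[of k l] sep[of i j k l] sep[of k l i j] by auto
qed

lemma valid_arcs_insert_enclosing:
  assumes S: "valid_arcs S" and inside: "\<forall>(k, l)\<in>S. i < k \<and> l < j" and "i < j" "j \<noteq> i + 1"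
  shows "valid_arcs (insert (i, j) S)"
proof (rule valid_arcsI)
  have inside: "i < k \<and> l < j" if "(k, l) \<in> S" for k l using inside that by fastforce
  note arc = valid_arcs_arc[OF S]
  fix p q k l
  show "(p, q) \<in> insert (i, j) S \<Longrightarrow> p < q \<and> q \<noteq> p + 1" using arc assms by blast
  show "(p, q) \<in> insert (i, j) S \<Longrightarrow> (k, l) \<in> insert (i, j) S \<Longrightarrow> (p, q) \<noteq> (k, l) \<Longrightarrow>
      p \<noteq> k \<and> p \<noteq> l \<and> q \<noteq> k \<and> q \<noteq> l"
    using valid_arcs_disjoint[OF S, of p q k l] arc[of p q] arc[of k l] inside[of p q] inside[of k l]
    by auto
  show "(p, q) \<in> insert (i, j) S \<Longrightarrow> (k, l) \<in> insert (i, j) S \<Longrightarrow> \<not> (p < k \<and> k < q \<and> q < l)"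
    using valid_arcs_noncrossing[OF S, of p q k l] arc[of p q] arc[of k l] inside[of p q] inside[of k l]
    by auto
qed

definition shift :: "nat \<Rightarrow> nat \<times> nat \<Rightarrow> nat \<times> nat" where
  "shift d = (\<lambda>(i, j). (i + d, j + d))"

definition unshift :: "nat \<Rightarrow> nat \<times> nat \<Rightarrow> nat \<times> nat" where
  "unshift d = (\<lambda>(i, j). (i - d, j - d))"

lemma shift_Pair [simp]: "shift d (i, j) = (i + d, j + d)"
  by (simp add: shift_def)

lemma unshift_Pair [simp]: "unshift d (i, j) = (i - d, j - d)"
  by (simp add: unshift_def)

lemma inj_shift: "inj (shift d)"
  by (auto simp: inj_on_def shift_def)

lemma unshift_shift [simp]: "unshift d (shift d x) = x"
  by (cases x) simp

lemma shift_unshift_image: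
  assumes "\<forall>(i, j)\<in>A. d \<le> i \<and> d \<le> j"
  shows "shift d ` unshift d ` A = A"
proof -
  have "shift d (unshift d x) = x" if "x \<in> A" for x
    using assms that by (cases x) auto
  then show ?thesis by (force simp: image_image)
qed

lemma valid_arcs_shift_iff: "valid_arcs (shift d ` S) \<longleftrightarrow> valid_arcs S"
  unfolding valid_arcs_def by (simp add: shift_def split_beta)

definition exterior_arcs :: "(nat \<times> nat) set \<Rightarrow> (nat \<times> nat) set" where
  "exterior_arcs S = {(k, l) \<in> S. \<not> (\<exists>(k', l')\<in>S. k' < k \<and> l < l')}"

lemma directly_nested_cong:
  assumes "A \<subseteq> S" and "\<forall>(k, l)\<in>S. fst a < k \<and> l < snd a \<longrightarrow> (k, l) \<in> A"
  shows "directly_nested S a = directly_nested A a"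
  using assms unfolding directly_nested_def by (cases a) (simp; blast)

lemma directly_nested_shift:
  "directly_nested (shift d ` S) (shift d a) = shift d ` directly_nested S a"
proof (cases a)
  case (Pair p q)
  show ?thesis
    unfolding directly_nested_def Pair by (rule set_eqI) (auto simp: image_iff; fastforce)
qed

lemma exterior_arcs_shift: "exterior_arcs (shift d ` S) = shift d ` exterior_arcs S"
  unfolding exterior_arcs_def by (rule set_eqI) (auto simp: image_iff; fastforce)

lemma directly_nested_enclosing:
  "\<forall>(k, l)\<in>S. i < k \<and> k < l \<and> l < j \<Longrightarrow> directly_nested (insert (i, j) S) (i, j) = exterior_arcs S"
  unfolding directly_nested_def exterior_arcs_def by (simp; blast)

lemma exterior_arcs_Un:
  assumes A: "valid_arcs A" and B: "valid_arcs B" and sep: "\<forall>x\<in>A. \<forall>y\<in>B. snd x < fst y"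
  shows "exterior_arcs (A \<union> B) = exterior_arcs A \<union> exterior_arcs B"
proof -
  have sep: "j < k" if "(i, j) \<in> A" "(k, l) \<in> B" for i j k l using sep that by fastforce
  have "\<not> (k' < k \<and> l < l')" if "(k, l) \<in> A" "(k', l') \<in> B" for k l k' l'
    using sep[OF that] valid_arcs_arc[OF A that(1)] by linarith
  moreover have "\<not> (k' < k \<and> l < l')" if "(k, l) \<in> B" "(k', l') \<in> A" for k l k' l'
    using sep[OF that(2,1)] valid_arcs_arc[OF B that(1)] by linarith
  ultimately show ?thesis unfolding exterior_arcs_def by blast
qed

section \<open>Weights as products over arcs\<close>

definition loop_factor :: "nat \<Rightarrow> real" where
  "loop_factor k = (if k = 0 then exp (1/2) else if k = 1 then exp 1 else exp (-5))"

definition arc_weight :: "(nat \<times> nat) set \<Rightarrow> nat \<times> nat \<Rightarrow> real" where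
  "arc_weight S a = 6/16 * loop_factor (card (directly_nested S a))"

lemma ss_weight_eq_prod:
  assumes "finite S"
  shows "ss_weight S = (\<Prod>a\<in>S. arc_weight S a)"
proof -
  define c where "c a = card (directly_nested S a)" for a
  define e where "e (k::nat) = (if k = 0 then 1/2 else if k = 1 then 1 else -5 :: real)" for k
  have "(\<Sum>a\<in>S. e (c a)) = (\<Sum>a\<in>S. (if c a = 0 then 1/2 else 0) + (if c a = 1 then 1 else 0)
      + (if 2 \<le> c a then -5 else 0))"
    by (rule sum.cong) (auto simp: e_def)
  also have "\<dots> = 1/2 * real (num_hairpin S) + 1 * real (num_interior S) + -5 * real (num_multi S)"
    using assms
    by (simp add: sum.distrib sum.If_cases Int_def num_hairpin_def num_interior_def num_multi_def c_def)
  finally have sum_e: "exp (\<Sum>a\<in>S. e (c a)) = exp (1/2 * real (num_hairpin S))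
      * exp (1 * real (num_interior S)) * exp (-5 * real (num_multi S))"
    by (simp only: exp_add)
  have "loop_factor k = exp (e k)" for k by (simp add: loop_factor_def e_def)
  then have "(\<Prod>a\<in>S. arc_weight S a) = (6/16) ^ card S * (\<Prod>a\<in>S. exp (e (c a)))"
    by (simp only: arc_weight_def prod.distrib prod_constant c_def)
  also have "\<dots> = (6/16) ^ card S * exp (\<Sum>a\<in>S. e (c a))"
    using assms by (simp add: exp_sum)
  finally show ?thesis
    unfolding sum_e ss_weight_def by (simp add: mult.assoc)
qed

lemma ss_weight_Un:
  assumes "finite A" "finite B" and A: "valid_arcs A" and B: "valid_arcs B"
    and sep: "\<forall>x\<in>A. \<forall>y\<in>B. snd x < fst y"
  shows "ss_weight (A \<union> B) = ss_weight A * ss_weight B"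
proof -
  have sep: "j < k" if "(i, j) \<in> A" "(k, l) \<in> B" for i j k l using sep that by fastforce
  have "False" if "(i, j) \<in> A" "(i, j) \<in> B" for i j
    using sep[OF that] valid_arcs_arc[OF A that(1)] by simp
  then have "A \<inter> B = {}" by auto
  moreover have "directly_nested (A \<union> B) x = directly_nested A x" if "x \<in> A" for x
  proof (cases x)
    case (Pair p q)
    show ?thesis
      unfolding Pair
      by (rule directly_nested_cong) (use sep[OF that[unfolded Pair]] valid_arcs_arc[OF B] in fastforce)+
  qed
  moreover have "directly_nested (A \<union> B) x = directly_nested B x" if "x \<in> B" for x
  proof (cases x)
    case (Pair p q)
    show ?thesis
      unfolding Pair
      by (rule directly_nested_cong) (use sep[OF _ that[unfolded Pair]] valid_arcs_arc[OF A] in fastforce)+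
  qed
  ultimately show ?thesis
    using assms by (simp add: ss_weight_eq_prod prod.union_disjoint arc_weight_def cong: prod.cong)
qed

lemma ss_weight_shift:
  assumes "finite S"
  shows "ss_weight (shift d ` S) = ss_weight S"
proof -
  have inj: "inj_on (shift d) X" for X using inj_shift by (rule inj_on_subset) simp
  have "ss_weight (shift d ` S) = (\<Prod>x\<in>S. arc_weight (shift d ` S) (shift d x))"
    using assms by (simp add: ss_weight_eq_prod prod.reindex[OF inj])
  also have "\<dots> = ss_weight S"
    using assms by (simp add: ss_weight_eq_prod arc_weight_def directly_nested_shift card_image[OF inj])
  finally show ?thesis .
qed

section \<open>Juxtaposition and enclosure\<close>

lemma sec_structD: "sec_struct n S \<Longrightarrow> (i, j) \<in> S \<Longrightarrow> 1 \<le> i \<and> i < j \<and> j \<le> n"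
  unfolding sec_struct_def by blast

lemma sec_struct_valid_arcs: "sec_struct n S \<Longrightarrow> valid_arcs S"
  by (simp add: sec_struct_iff)

lemma sec_structI: "valid_arcs S \<Longrightarrow> (\<And>i j. (i, j) \<in> S \<Longrightarrow> 1 \<le> i \<and> j \<le> n) \<Longrightarrow> sec_struct n S"
  by (auto simp: sec_struct_iff)

lemma finite_sec_structs: "finite {S. sec_struct n S}"
  by (rule finite_subset[of _ "Pow ({1..n} \<times> {1..n})"]) (use sec_structD in fastforce)+

lemma sec_struct_finite: "sec_struct n S \<Longrightarrow> finite S"
  by (rule finite_subset[of _ "{1..n} \<times> {1..n}"]) (use sec_structD in fastforce)+

lemma sec_struct_unshift:
  assumes "valid_arcs A" and inside: "\<forall>(i, j)\<in>A. d < i \<and> j \<le> d + m"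
  shows "sec_struct m (unshift d ` A)"
proof (rule sec_structI)
  have "shift d ` unshift d ` A = A"
    by (rule shift_unshift_image) (use inside valid_arcs_arc[OF assms(1)] in fastforce)
  then show "valid_arcs (unshift d ` A)"
    using assms(1) valid_arcs_shift_iff by metis
  show "1 \<le> i \<and> j \<le> m" if "(i, j) \<in> unshift d ` A" for i j
    using that inside by auto
qed

lemma sec_struct_arc_left_or_right:
  assumes S: "sec_struct n S" and "(a + 1, n) \<in> S" "(i, j) \<in> S"
  shows "j \<le> a \<or> a < i"
proof (rule ccontr)
  assume "\<not> (j \<le> a \<or> a < i)"
  moreover have "(i, j) = (a + 1, n) \<or> j \<noteq> a + 1 \<and> j \<noteq> n"
    using valid_arcs_disjoint[OF sec_struct_valid_arcs[OF S] assms(3,2)] by blast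
  moreover have "\<not> (i < a + 1 \<and> a + 1 < j \<and> j < n)"
    using valid_arcs_noncrossing[OF sec_struct_valid_arcs[OF S] assms(3,2)] .
  ultimately show False
    using sec_structD[OF S assms(3)] by auto
qed

lemma sec_struct_arc_inside_closing:
  assumes S: "sec_struct n S" and "(1, n) \<in> S" "(i, j) \<in> S" "(i, j) \<noteq> (1, n)"
  shows "1 < i \<and> j < n"
  using valid_arcs_disjoint[OF sec_struct_valid_arcs[OF S] assms(3,2,4)] sec_structD[OF S assms(3)]
  by auto

definition join_at :: "nat \<Rightarrow> (nat \<times> nat) set \<Rightarrow> (nat \<times> nat) set \<Rightarrow> (nat \<times> nat) set" where
  "join_at a S T = S \<union> shift a ` T"

definition split_at :: "nat \<Rightarrow> (nat \<times> nat) set \<Rightarrow> (nat \<times> nat) set \<times> (nat \<times> nat) set" where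
  "split_at a S = ({x\<in>S. snd x \<le> a}, unshift a ` {x\<in>S. a < fst x})"

lemma separated_join_at:
  assumes "sec_struct a S" "sec_struct m T"
  shows "\<forall>x\<in>S. \<forall>y\<in>shift a ` T. snd x < fst y"
  using sec_structD[OF assms(1)] sec_structD[OF assms(2)] by fastforce

lemma sec_struct_join_at:
  assumes S: "sec_struct a S" and T: "sec_struct m T"
  shows "sec_struct (a + m) (join_at a S T)"
proof (rule sec_structI)
  show "valid_arcs (join_at a S T)"
    unfolding join_at_def using separated_join_at[OF S T] sec_struct_valid_arcs[OF S] sec_struct_valid_arcs[OF T]
    by (intro valid_arcs_Un) (auto simp: valid_arcs_shift_iff)
  show "1 \<le> i \<and> j \<le> a + m" if "(i, j) \<in> join_at a S T" for i j
    using that sec_structD[OF S] sec_structD[OF T] by (fastforce simp: join_at_def)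
qed

lemma join_at_closing: "(1, m) \<in> T \<Longrightarrow> (a + 1, a + m) \<in> join_at a S T"
  unfolding join_at_def by (drule imageI[where f = "shift a"]) (simp add: add.commute)

lemma split_at_join_at:
  assumes S: "sec_struct a S" and T: "sec_struct m T"
  shows "split_at a (join_at a S T) = (S, T)"
proof -
  have "snd x \<le> a \<and> \<not> a < fst x" if "x \<in> S" for x
    using that sec_structD[OF S] by (cases x) fastforce
  moreover have "\<not> snd x \<le> a \<and> a < fst x" if "x \<in> shift a ` T" for x
    using that sec_structD[OF T] by fastforce
  ultimately have "{x \<in> join_at a S T. snd x \<le> a} = S" "{x \<in> join_at a S T. a < fst x} = shift a ` T"
    unfolding join_at_def by blast+
  then show ?thesis by (simp add: split_at_def image_image)
qed

lemma split_at_closed: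
  assumes S: "sec_struct (a + m) S" and closing: "(a + 1, a + m) \<in> S"
  shows "case_prod (join_at a) (split_at a S) = S"
    and "split_at a S \<in> {S. sec_struct a S} \<times> {T. sec_struct m T \<and> (1, m) \<in> T}"
proof -
  have right: "\<forall>(i, j)\<in>{x\<in>S. a < fst x}. a < i \<and> i < j \<and> j \<le> a + m"
    using sec_structD[OF S] by auto
  have "shift a ` unshift a ` {x\<in>S. a < fst x} = {x\<in>S. a < fst x}"
    by (rule shift_unshift_image) (use right in fastforce)
  moreover have "{x\<in>S. snd x \<le> a} \<union> {x\<in>S. a < fst x} = S"
    using sec_struct_arc_left_or_right[OF S closing] by force
  ultimately show "case_prod (join_at a) (split_at a S) = S"
    by (simp add: join_at_def split_at_def)
  have "sec_struct a {x\<in>S. snd x \<le> a}"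
    using valid_arcs_subset[OF sec_struct_valid_arcs[OF S]] sec_structD[OF S]
    by (intro sec_structI) auto
  moreover have "sec_struct m (unshift a ` {x\<in>S. a < fst x})"
    using valid_arcs_subset[OF sec_struct_valid_arcs[OF S]] right
    by (intro sec_struct_unshift) auto
  moreover have "(1, m) \<in> unshift a ` {x\<in>S. a < fst x}"
    using closing by (force simp: image_iff)
  ultimately show "split_at a S \<in> {S. sec_struct a S} \<times> {T. sec_struct m T \<and> (1, m) \<in> T}"
    by (simp add: split_at_def)
qed

lemma join_at_bij:
  "bij_betw (case_prod (join_at a))
     ({S. sec_struct a S} \<times> {T. sec_struct m T \<and> (1, m) \<in> T})
     {S. sec_struct (a + m) S \<and> (a + 1, a + m) \<in> S}"
proof (rule bij_betw_byWitness[where f' = "split_at a"])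
  show "\<forall>p\<in>{S. sec_struct a S} \<times> {T. sec_struct m T \<and> (1, m) \<in> T}. split_at a (case_prod (join_at a) p) = p"
    using split_at_join_at by auto
  show "case_prod (join_at a) ` ({S. sec_struct a S} \<times> {T. sec_struct m T \<and> (1, m) \<in> T})
      \<subseteq> {S. sec_struct (a + m) S \<and> (a + 1, a + m) \<in> S}"
    using sec_struct_join_at join_at_closing by fastforce
  show "\<forall>S\<in>{S. sec_struct (a + m) S \<and> (a + 1, a + m) \<in> S}. case_prod (join_at a) (split_at a S) = S"
  proof
    fix S assume "S \<in> {S. sec_struct (a + m) S \<and> (a + 1, a + m) \<in> S}"
    then show "case_prod (join_at a) (split_at a S) = S"
      by (intro split_at_closed(1)[where m = m]) simp_all
  qed
  show "split_at a ` {S. sec_struct (a + m) S \<and> (a + 1, a + m) \<in> S}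
      \<subseteq> {S. sec_struct a S} \<times> {T. sec_struct m T \<and> (1, m) \<in> T}"
    using split_at_closed(2) by blast
qed

definition enclose :: "nat \<Rightarrow> (nat \<times> nat) set \<Rightarrow> (nat \<times> nat) set" where
  "enclose m S = insert (1, m + 2) (shift 1 ` S)"

definition unenclose :: "nat \<Rightarrow> (nat \<times> nat) set \<Rightarrow> (nat \<times> nat) set" where
  "unenclose m S = unshift 1 ` (S - {(1, m + 2)})"

lemma sec_struct_enclose:
  assumes S: "sec_struct m S" and "1 \<le> m"
  shows "sec_struct (m + 2) (enclose m S)"
  unfolding enclose_def
proof (rule sec_structI)
  show "valid_arcs (insert (1, m + 2) (shift 1 ` S))"
  proof (rule valid_arcs_insert_enclosing)
    show "valid_arcs (shift 1 ` S)"
      using sec_struct_valid_arcs[OF S] by (simp add: valid_arcs_shift_iff)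
    show "\<forall>(k, l)\<in>shift 1 ` S. 1 < k \<and> l < m + 2"
      using sec_structD[OF S] by fastforce
  qed (use \<open>1 \<le> m\<close> in auto)
  show "1 \<le> i \<and> j \<le> m + 2" if "(i, j) \<in> insert (1, m + 2) (shift 1 ` S)" for i j
    using that sec_structD[OF S] by fastforce
qed

lemma unenclose_enclose:
  assumes S: "sec_struct m S"
  shows "unenclose m (enclose m S) = S"
proof -
  have "(1, m + 2) \<notin> shift 1 ` S" using sec_structD[OF S] by fastforce
  then have "insert (1, m + 2) (shift 1 ` S) - {(1, m + 2)} = shift 1 ` S" by blast
  then show ?thesis by (simp add: enclose_def unenclose_def image_image)
qed

lemma unenclose_closed:
  assumes S: "sec_struct (m + 2) S" and closing: "(1, m + 2) \<in> S"
  shows "enclose m (unenclose m S) = S" and "sec_struct m (unenclose m S)"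
proof -
  have "(1 < i \<and> j \<le> 1 + m) \<and> (1 \<le> i \<and> 1 \<le> j)" if "(i, j) \<in> S - {(1, m + 2)}" for i j
    using sec_struct_arc_inside_closing[OF S closing, of i j] sec_structD[OF S, of i j] that by auto
  then have inside: "\<forall>(i, j)\<in>S - {(1, m + 2)}. 1 < i \<and> j \<le> 1 + m"
    and "\<forall>(i, j)\<in>S - {(1, m + 2)}. 1 \<le> i \<and> 1 \<le> j"
    by blast+
  then have "shift 1 ` unshift 1 ` (S - {(1, m + 2)}) = S - {(1, m + 2)}"
    by (intro shift_unshift_image)
  then show "enclose m (unenclose m S) = S"
    using closing by (auto simp: enclose_def unenclose_def)
  show "sec_struct m (unenclose m S)"
    unfolding unenclose_def using valid_arcs_subset[OF sec_struct_valid_arcs[OF S]] inside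
    by (intro sec_struct_unshift) auto
qed

lemma enclose_bij:
  assumes "1 \<le> m"
  shows "bij_betw (enclose m) {S. sec_struct m S} {S. sec_struct (m + 2) S \<and> (1, m + 2) \<in> S}"
proof (rule bij_betw_byWitness[where f' = "unenclose m"])
  show "\<forall>S\<in>{S. sec_struct m S}. unenclose m (enclose m S) = S"
    using unenclose_enclose by blast
  show "\<forall>S\<in>{S. sec_struct (m + 2) S \<and> (1, m + 2) \<in> S}. enclose m (unenclose m S) = S"
    using unenclose_closed(1) by blast
  show "enclose m ` {S. sec_struct m S} \<subseteq> {S. sec_struct (m + 2) S \<and> (1, m + 2) \<in> S}"
    using sec_struct_enclose assms by (auto simp: enclose_def)
  show "unenclose m ` {S. sec_struct (m + 2) S \<and> (1, m + 2) \<in> S} \<subseteq> {S. sec_struct m S}"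
    using unenclose_closed(2) by blast
qed

lemma ss_weight_enclose:
  assumes S: "sec_struct m S"
  shows "ss_weight (enclose m S) = 6/16 * loop_factor (card (exterior_arcs S)) * ss_weight S"
proof -
  let ?S = "shift 1 ` S"
  have fin: "finite ?S" using sec_struct_finite[OF S] by simp
  have inside: "\<forall>(k, l)\<in>?S. 1 < k \<and> k < l \<and> l < m + 2" using sec_structD[OF S] by fastforce
  have "(1, m + 2) \<notin> ?S" using inside by auto
  then have "ss_weight (insert (1, m + 2) ?S)
      = arc_weight (insert (1, m + 2) ?S) (1, m + 2) * (\<Prod>x\<in>?S. arc_weight (insert (1, m + 2) ?S) x)"
    using fin by (simp add: ss_weight_eq_prod)
  also have "(\<Prod>x\<in>?S. arc_weight (insert (1, m + 2) ?S) x) = (\<Prod>x\<in>?S. arc_weight ?S x)"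
  proof (rule prod.cong[OF refl])
    fix x assume "x \<in> ?S"
    then have "\<not> fst x < 1" using inside by auto
    then have "directly_nested (insert (1, m + 2) ?S) x = directly_nested ?S x"
      by (intro directly_nested_cong) blast+
    then show "arc_weight (insert (1, m + 2) ?S) x = arc_weight ?S x" by (simp add: arc_weight_def)
  qed
  also have "\<dots> = ss_weight ?S"
    by (rule ss_weight_eq_prod[OF fin, symmetric])
  also have "\<dots> = ss_weight S"
    by (rule ss_weight_shift[OF sec_struct_finite[OF S]])
  also have "arc_weight (insert (1, m + 2) ?S) (1, m + 2) = 6/16 * loop_factor (card (exterior_arcs S))"
    unfolding arc_weight_def directly_nested_enclosing[OF inside] exterior_arcs_shift
    by (simp add: card_image inj_on_subset[OF inj_shift])
  finally show ?thesis unfolding enclose_def .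
qed

lemma exterior_arcs_closed:
  assumes T: "sec_struct m T" and closing: "(1, m) \<in> T"
  shows "exterior_arcs T = {(1, m)}"
proof -
  have "(1, m) \<in> exterior_arcs T"
    using closing sec_structD[OF T] unfolding exterior_arcs_def by fastforce
  moreover have "x \<notin> exterior_arcs T" if "x \<in> T" "x \<noteq> (1, m)" for x
    using that closing sec_struct_arc_inside_closing[OF T closing]
    unfolding exterior_arcs_def by (cases x) blast
  ultimately show ?thesis unfolding exterior_arcs_def by blast
qed

lemma ss_weight_join_at:
  assumes S: "sec_struct a S" and T: "sec_struct m T"
  shows "ss_weight (join_at a S T) = ss_weight S * ss_weight T"
  unfolding join_at_def using separated_join_at[OF S T]
    sec_struct_finite[OF S] sec_struct_finite[OF T] sec_struct_valid_arcs[OF S] sec_struct_valid_arcs[OF T]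
  by (simp add: ss_weight_Un valid_arcs_shift_iff ss_weight_shift)

lemma card_exterior_arcs_join_at:
  assumes S: "sec_struct a S" and T: "sec_struct m T" and closing: "(1, m) \<in> T"
  shows "card (exterior_arcs (join_at a S T)) = Suc (card (exterior_arcs S))"
proof -
  have "exterior_arcs (join_at a S T) = insert (1 + a, m + a) (exterior_arcs S)"
    unfolding join_at_def using separated_join_at[OF S T] sec_struct_valid_arcs[OF S] sec_struct_valid_arcs[OF T]
    by (simp add: exterior_arcs_Un valid_arcs_shift_iff exterior_arcs_shift exterior_arcs_closed[OF T closing])
  moreover have "(1 + a, m + a) \<notin> exterior_arcs S"
    using sec_structD[OF S] unfolding exterior_arcs_def by fastforce
  moreover have "finite (exterior_arcs S)"
    using sec_struct_finite[OF S] by (rule finite_subset[rotated]) (auto simp: exterior_arcs_def)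
  ultimately show ?thesis by simp
qed

section \<open>Recurrences for the total weights\<close>

definition exterior_weight :: "nat \<Rightarrow> (nat \<Rightarrow> bool) \<Rightarrow> real" where
  "exterior_weight n P = (\<Sum>S | sec_struct n S. if P (card (exterior_arcs S)) then ss_weight S else 0)"

lemma f0_eq_exterior_weight: "f0 n = exterior_weight n (\<lambda>_. True)"
  by (simp add: f0_def exterior_weight_def)

lemma exterior_weight_disj:
  assumes "\<And>k. \<not> (P k \<and> Q k)"
  shows "exterior_weight n (\<lambda>k. P k \<or> Q k) = exterior_weight n P + exterior_weight n Q"
  unfolding exterior_weight_def sum.distrib[symmetric] by (rule sum.cong) (use assms in auto)

lemma exterior_weight_0: "exterior_weight 0 P = (if P 0 then 1 else 0)"
proof -
  have "sec_struct 0 S \<longleftrightarrow> S = {}" for S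
    by (auto dest: sec_structD simp: sec_struct_def)
  then have "{S. sec_struct 0 S} = {{}}" by auto
  then show ?thesis
    by (simp add: exterior_weight_def exterior_arcs_def ss_weight_def num_hairpin_def
        num_interior_def num_multi_def)
qed

lemma f0_star_le_2: "n \<le> 2 \<Longrightarrow> f0_star n = 0"
proof -
  assume "n \<le> 2"
  then have no_structs: "{S. sec_struct n S \<and> (1, n) \<in> S} = {}"
    using sec_structD valid_arcs_arc[OF sec_struct_valid_arcs] by fastforce
  show ?thesis
    unfolding f0_star_def no_structs by simp
qed

lemma f0_star_enclose:
  assumes "1 \<le> m"
  shows "f0_star (m + 2) = 6/16 * (exp (1/2) * exterior_weight m (\<lambda>k. k = 0)
    + exp 1 * exterior_weight m (\<lambda>k. k = 1) + exp (-5) * exterior_weight m (\<lambda>k. 2 \<le> k))"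
proof -
  have "f0_star (m + 2) = (\<Sum>S | sec_struct m S. ss_weight (enclose m S))"
    unfolding f0_star_def by (rule sum.reindex_bij_betw[OF enclose_bij[OF assms], symmetric])
  also have "\<dots> = (\<Sum>S | sec_struct m S. 6/16 * loop_factor (card (exterior_arcs S)) * ss_weight S)"
    by (rule sum.cong[OF refl]) (simp only: mem_Collect_eq ss_weight_enclose)
  also have "\<dots> = (\<Sum>S | sec_struct m S. 6/16 * (
        exp (1/2) * (if card (exterior_arcs S) = 0 then ss_weight S else 0)
      + exp 1 * (if card (exterior_arcs S) = 1 then ss_weight S else 0)
      + exp (-5) * (if 2 \<le> card (exterior_arcs S) then ss_weight S else 0)))"
    by (rule sum.cong[OF refl]) (simp add: loop_factor_def)
  also have "\<dots> = 6/16 * (exp (1/2) * exterior_weight m (\<lambda>k. k = 0)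
      + exp 1 * exterior_weight m (\<lambda>k. k = 1) + exp (-5) * exterior_weight m (\<lambda>k. 2 \<le> k))"
    unfolding sum_distrib_left[symmetric] by (simp only: exterior_weight_def sum.distrib sum_distrib_left)
  finally show ?thesis .
qed

lemma sum_last_vertex_paired:
  "(\<Sum>S | sec_struct (a + m) S \<and> (a + 1, a + m) \<in> S. if P (card (exterior_arcs S)) then ss_weight S else 0)
    = exterior_weight a (\<lambda>k. P (Suc k)) * f0_star m"
proof -
  define g where "g S = (if P (card (exterior_arcs S)) then ss_weight S else 0)" for S
  have "(\<Sum>S | sec_struct (a + m) S \<and> (a + 1, a + m) \<in> S. g S)
      = (\<Sum>(S, T) \<in> {S. sec_struct a S} \<times> {T. sec_struct m T \<and> (1, m) \<in> T}. g (join_at a S T))"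
    using sum.reindex_bij_betw[OF join_at_bij, of g, symmetric] by (simp add: case_prod_unfold)
  also have "\<dots> = (\<Sum>(S, T) \<in> {S. sec_struct a S} \<times> {T. sec_struct m T \<and> (1, m) \<in> T}.
          (if P (Suc (card (exterior_arcs S))) then ss_weight S else 0) * ss_weight T)"
    by (rule sum.cong) (auto simp: g_def ss_weight_join_at card_exterior_arcs_join_at)
  also have "\<dots> = exterior_weight a (\<lambda>k. P (Suc k)) * f0_star m"
    by (simp add: sum.cartesian_product[symmetric] exterior_weight_def f0_star_def sum_product)
  finally show ?thesis by (simp add: g_def)
qed

lemma sec_structs_Suc:
  "{S. sec_struct (Suc n) S}
    = {S. sec_struct n S} \<union> (\<Union>a\<le>n. {S. sec_struct (Suc n) S \<and> (a + 1, Suc n) \<in> S})"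
proof (intro equalityI subsetI)
  fix S assume "S \<in> {S. sec_struct (Suc n) S}"
  then have S: "sec_struct (Suc n) S" by simp
  show "S \<in> {S. sec_struct n S} \<union> (\<Union>a\<le>n. {S. sec_struct (Suc n) S \<and> (a + 1, Suc n) \<in> S})"
  proof (cases "\<exists>i. (i, Suc n) \<in> S")
    case True
    then obtain i where i: "(i, Suc n) \<in> S" by blast
    with sec_structD[OF S i] have "i - 1 \<le> n" "(i - 1 + 1, Suc n) \<in> S" by auto
    with S show ?thesis by blast
  next
    case False
    have "j \<le> n" if "(i, j) \<in> S" for i j
      using sec_structD[OF S that] False that by (cases "j = Suc n") auto
    then have "sec_struct n S"
      using sec_structD[OF S] by (intro sec_structI[OF sec_struct_valid_arcs[OF S]]) auto
    then show ?thesis by blast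
  qed
next
  fix S assume "S \<in> {S. sec_struct n S} \<union> (\<Union>a\<le>n. {S. sec_struct (Suc n) S \<and> (a + 1, Suc n) \<in> S})"
  then show "S \<in> {S. sec_struct (Suc n) S}"
    by (auto simp: sec_struct_iff)
qed

lemma exterior_weight_Suc:
  "exterior_weight (Suc n) P
    = exterior_weight n P + (\<Sum>a\<le>n. exterior_weight a (\<lambda>k. P (Suc k)) * f0_star (Suc n - a))"
proof -
  define C where "C a = {S. sec_struct (Suc n) S \<and> (a + 1, Suc n) \<in> S}" for a
  define g where "g S = (if P (card (exterior_arcs S)) then ss_weight S else 0)" for S
  have finite_C: "finite (C a)" for a
    by (rule finite_subset[OF _ finite_sec_structs[of "Suc n"]]) (auto simp: C_def)
  have "{S. sec_struct n S} \<inter> (\<Union>a\<le>n. C a) = {}"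
    by (auto simp: C_def dest: sec_structD)
  moreover have "C a \<inter> C b = {}" if "a \<noteq> b" for a b
    using that valid_arcs_disjoint[OF sec_struct_valid_arcs] by (fastforce simp: C_def)
  moreover have "sum g (C a) = exterior_weight a (\<lambda>k. P (Suc k)) * f0_star (Suc n - a)" if "a \<le> n" for a
    using sum_last_vertex_paired[of P a "Suc n - a"] that by (simp add: C_def g_def)
  ultimately have "sum g {S. sec_struct (Suc n) S}
      = sum g {S. sec_struct n S} + (\<Sum>a\<le>n. exterior_weight a (\<lambda>k. P (Suc k)) * f0_star (Suc n - a))"
    unfolding sec_structs_Suc C_def[symmetric]
    by (simp add: sum.union_disjoint finite_sec_structs finite_C sum.UNION_disjoint)
  then show ?thesis by (simp add: exterior_weight_def g_def)
qed

section \<open>Generating functions\<close>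

lemma f0_split_exterior:
  "f0 n = exterior_weight n (\<lambda>k. k = 0) + exterior_weight n (\<lambda>k. k = 1) + exterior_weight n (\<lambda>k. 2 \<le> k)"
proof -
  have "f0 n = exterior_weight n (\<lambda>k. (k = 0 \<or> k = 1) \<or> 2 \<le> k)"
    unfolding f0_eq_exterior_weight by (rule arg_cong[where f = "exterior_weight n"]) auto
  also have "\<dots> = exterior_weight n (\<lambda>k. k = 0 \<or> k = 1) + exterior_weight n (\<lambda>k. 2 \<le> k)"
    by (rule exterior_weight_disj) auto
  also have "exterior_weight n (\<lambda>k. k = 0 \<or> k = 1) = exterior_weight n (\<lambda>k. k = 0) + exterior_weight n (\<lambda>k. k = 1)"
    by (rule exterior_weight_disj) auto
  finally show ?thesis .
qed

lemma fps_one_minus_X_mult_Abs_fps: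
  fixes h g f :: "nat \<Rightarrow> 'a::comm_ring_1"
  assumes rec: "\<And>n. h (Suc n) = h n + (\<Sum>a\<le>n. g a * f (Suc n - a))" and "f 0 = 0"
  shows "(1 - fps_X) * Abs_fps h = fps_const (h 0) + Abs_fps g * Abs_fps f"
proof (rule fps_ext)
  fix n
  show "fps_nth ((1 - fps_X) * Abs_fps h) n = fps_nth (fps_const (h 0) + Abs_fps g * Abs_fps f) n"
  proof (cases n)
    case (Suc k)
    have "fps_nth ((1 - fps_X) * Abs_fps h) n = h (Suc k) - h k"
      using Suc by (simp add: algebra_simps)
    moreover have "fps_nth (Abs_fps g * Abs_fps f) (Suc k) = (\<Sum>a\<le>k. g a * f (Suc k - a))"
      using \<open>f 0 = 0\<close> by (simp add: fps_mult_nth atLeast0AtMost)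
    ultimately show ?thesis
      using Suc rec[of k] by simp
  qed (simp add: \<open>f 0 = 0\<close> algebra_simps)
qed

definition exterior_gf :: "(nat \<Rightarrow> bool) \<Rightarrow> real fps" where
  "exterior_gf P = Abs_fps (\<lambda>n. exterior_weight n P)"

lemma exterior_gf_recurrence:
  "(1 - fps_X) * exterior_gf P
    = fps_const (if P 0 then 1 else 0) + exterior_gf (\<lambda>k. P (Suc k)) * Abs_fps f0_star"
  unfolding exterior_gf_def
  by (subst fps_one_minus_X_mult_Abs_fps)
    (simp_all add: exterior_weight_Suc exterior_weight_0 f0_star_le_2)

lemma exterior_gf_False: "exterior_gf (\<lambda>_. False) = 0"
  by (simp add: exterior_gf_def exterior_weight_def fps_zero_def)

(* Empty structures are the ones without exterior arcs; the -1 drops the empty structure on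
   zero vertices, which would close the forbidden hairpin (i, i + 1). *)
lemma f0_star_fps:
  "Abs_fps f0_star = fps_X\<^sup>2 * (fps_const (6/16 * exp (1/2)) * (exterior_gf (\<lambda>k. k = 0) - 1)
    + fps_const (6/16 * exp 1) * exterior_gf (\<lambda>k. k = 1)
    + fps_const (6/16 * exp (-5)) * exterior_gf (\<lambda>k. 2 \<le> k))"
  (is "_ = fps_X\<^sup>2 * ?loops")
proof (rule fps_ext)
  fix n
  show "fps_nth (Abs_fps f0_star) n = fps_nth (fps_X\<^sup>2 * ?loops) n"
  proof (cases "n \<le> 2")
    case True
    then have "n = 0 \<or> n = 1 \<or> n = 2" by auto
    then show ?thesis
      using True by (auto simp: f0_star_le_2 fps_X_power_mult_nth exterior_gf_def exterior_weight_0)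
  next
    case False
    then obtain m where "1 \<le> m" "n = m + 2"
      by (intro that[of "n - 2"]) auto
    then show ?thesis
      using f0_star_enclose[of m] by (simp add: fps_X_power_mult_nth exterior_gf_def algebra_simps)
  qed
qed

lemma f0_fps:
  "Abs_fps f0 = exterior_gf (\<lambda>k. k = 0) + exterior_gf (\<lambda>k. k = 1) + exterior_gf (\<lambda>k. 2 \<le> k)"
  by (rule fps_ext) (simp add: exterior_gf_def f0_split_exterior)

(* Intended reading: x = z, q = 1/(1 - z), h0, h1, h2 count the structures with 0, 1 and at
   least 2 exterior arcs, and i = 1/(1 - fs q). *)
lemma solve_loop_system:
  fixes x q fs f h0 h1 h2 c1 c2 c3 i :: "'a::idom"
  assumes q: "(1 - x) * q = 1" and h0: "(1 - x) * h0 = 1" and h1: "(1 - x) * h1 = h0 * fs"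
    and f: "(1 - x) * f = 1 + f * fs" and f_split: "f = h0 + h1 + h2"
    and fs: "fs = x^2 * (c1 * (h0 - 1) + c2 * h1 + c3 * h2)" and i: "i * (1 - fs * q) = 1"
  shows "fs = c1 * x^2 * (x * q) + c2 * x^2 * q^2 * fs + c3 * x^2 * ((fs * q)^2 * i) * q \<and> f = q * i"
proof -
  have h0_eq: "h0 = q" using q h0 by algebra
  have h1_eq: "h1 = q^2 * fs" using q h1 h0_eq by algebra
  have f_eq: "f = q * i" using q f i by algebra
  have h2_eq: "h2 = (fs * q)^2 * i * q" using f_split f_eq h0_eq h1_eq i by algebra
  have "h0 - 1 = x * q" using q h0_eq by algebra
  then show ?thesis using fs h2_eq h1_eq f_eq by (simp add: algebra_simps)
qed

lemma fixed_point_difference: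
  fixes g h q ig ih A B C :: "'a::idom"
  assumes "g = A + B * g + C * ((g * q)\<^sup>2 * ig) * q" "ig * (1 - g * q) = 1"
    and "h = A + B * h + C * ((h * q)\<^sup>2 * ih) * q" "ih * (1 - h * q) = 1"
  shows "(g - h) * ((1 - (g + h) * q) * (1 - B) + A * q - C * q^3 * (g + h)) = 0"
  using assms by algebra

lemma fps_fixed_point_unique:
  fixes A B C Q G H :: "'a::field fps"
  assumes G0: "fps_nth G 0 = 0" and G: "G = A + B * G + C * ((G * Q)\<^sup>2 * inverse (1 - G * Q)) * Q"
    and H0: "fps_nth H 0 = 0" and H: "H = A + B * H + C * ((H * Q)\<^sup>2 * inverse (1 - H * Q)) * Q"
    and A0: "fps_nth A 0 = 0" and B0: "fps_nth B 0 = 0"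
  shows "G = H"
proof -
  have "(G - H) * ((1 - (G + H) * Q) * (1 - B) + A * Q - C * Q^3 * (G + H)) = 0"
    by (rule fixed_point_difference[OF G _ H]) (simp_all add: inverse_mult_eq_1 G0 H0)
  moreover have "fps_nth ((1 - (G + H) * Q) * (1 - B) + A * Q - C * Q^3 * (G + H)) 0 = 1"
    by (simp add: G0 H0 A0 B0)
  ultimately show ?thesis
    by (metis fps_zero_nth mult_eq_0_iff one_neq_zero right_minus_eq)
qed

lemma f0_star_f0_fps_equations:
  defines "Q \<equiv> inverse (1 - fps_X) :: real fps"
  shows "Abs_fps f0_star = fps_const (6/16 * exp (1/2)) * fps_X\<^sup>2 * (fps_X * Q)
            + fps_const (6/16 * exp 1) * fps_X\<^sup>2 * Q\<^sup>2 * Abs_fps f0_star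
            + fps_const (6/16 * exp (-5)) * fps_X\<^sup>2
                * ((Abs_fps f0_star * Q)\<^sup>2 * inverse (1 - Abs_fps f0_star * Q)) * Q
    \<and> Abs_fps f0 = Q * inverse (1 - Abs_fps f0_star * Q)"
proof (rule solve_loop_system)
  show "(1 - fps_X) * Q = 1"
    unfolding Q_def by (simp add: inverse_mult_eq_1')
  show "(1 - fps_X) * exterior_gf (\<lambda>k. k = 0) = 1"
    using exterior_gf_recurrence[of "\<lambda>k. k = 0"] by (simp add: exterior_gf_False)
  show "(1 - fps_X) * exterior_gf (\<lambda>k. k = 1) = exterior_gf (\<lambda>k. k = 0) * Abs_fps f0_star"
    using exterior_gf_recurrence[of "\<lambda>k. k = 1"] by simp
  show "(1 - fps_X) * Abs_fps f0 = 1 + Abs_fps f0 * Abs_fps f0_star"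
    using exterior_gf_recurrence[of "\<lambda>_. True"] by (simp add: exterior_gf_def f0_eq_exterior_weight[abs_def])
  show "inverse (1 - Abs_fps f0_star * Q) * (1 - Abs_fps f0_star * Q) = 1"
    by (simp add: inverse_mult_eq_1 f0_star_le_2)
qed (rule f0_fps, rule f0_star_fps)

theorem lemma3:
  fixes Fs F :: "real fps"
  defines "Fs \<equiv> Abs_fps f0_star"
    and "F \<equiv> Abs_fps f0"
  shows "Fs = fps_const (6/16 * exp (1/2)) * fps_X\<^sup>2 * (fps_X * inverse (1 - fps_X))
            + fps_const (6/16 * exp 1) * fps_X\<^sup>2 * (inverse (1 - fps_X))\<^sup>2 * Fs
            + fps_const (6/16 * exp (-5)) * fps_X\<^sup>2
                * ((Fs * inverse (1 - fps_X))\<^sup>2 * inverse (1 - Fs * inverse (1 - fps_X)))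
                * inverse (1 - fps_X)
    \<and> (\<forall>G :: real fps. fps_nth G 0 = 0 \<longrightarrow>
           G = fps_const (6/16 * exp (1/2)) * fps_X\<^sup>2 * (fps_X * inverse (1 - fps_X))
            + fps_const (6/16 * exp 1) * fps_X\<^sup>2 * (inverse (1 - fps_X))\<^sup>2 * G
            + fps_const (6/16 * exp (-5)) * fps_X\<^sup>2
                * ((G * inverse (1 - fps_X))\<^sup>2 * inverse (1 - G * inverse (1 - fps_X)))
                * inverse (1 - fps_X)
           \<longrightarrow> G = Fs)
    \<and> F = inverse (1 - fps_X) * inverse (1 - Fs * inverse (1 - fps_X))"
proof (intro conjI allI impI)
  note equations = f0_star_f0_fps_equations[folded Fs_def F_def]
  show Fs_eq: "Fs = fps_const (6/16 * exp (1/2)) * fps_X\<^sup>2 * (fps_X * inverse (1 - fps_X))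
            + fps_const (6/16 * exp 1) * fps_X\<^sup>2 * (inverse (1 - fps_X))\<^sup>2 * Fs
            + fps_const (6/16 * exp (-5)) * fps_X\<^sup>2
                * ((Fs * inverse (1 - fps_X))\<^sup>2 * inverse (1 - Fs * inverse (1 - fps_X)))
                * inverse (1 - fps_X)"
    using equations by blast
  show "F = inverse (1 - fps_X) * inverse (1 - Fs * inverse (1 - fps_X))"
    using equations by blast
  fix G :: "real fps"
  assume "fps_nth G 0 = 0" and "G = fps_const (6/16 * exp (1/2)) * fps_X\<^sup>2 * (fps_X * inverse (1 - fps_X))
            + fps_const (6/16 * exp 1) * fps_X\<^sup>2 * (inverse (1 - fps_X))\<^sup>2 * G
            + fps_const (6/16 * exp (-5)) * fps_X\<^sup>2
                * ((G * inverse (1 - fps_X))\<^sup>2 * inverse (1 - G * inverse (1 - fps_X)))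
                * inverse (1 - fps_X)"
  then show "G = Fs"
    by (rule fps_fixed_point_unique[OF _ _ _ Fs_eq]) (simp_all add: Fs_def f0_star_le_2)
qed

end
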